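(* Let $F$ be a saturated minimally unsatisfiable clause-set. Then singular DP-reduction is confluent on $F$, i.e., $|\mathrm{sDP}(F)| = 1$. In other words, the class of saturated minimally unsatisfiable clause-sets is contained in the class of $F \in \mathrm{MU}$ with $|\mathrm{sDP}(F)|=1$.
   Context: Literals are variables $v$ and their complements $\overline{v}$. A clause is a finite set of literals containing no complementary pair; a clause-set is a finite set of clauses. $\mathrm{var}(F)$ is the set of variables occurring in $F$. For a literal $x$, $\mathrm{ldeg}_F(x)$ is the number of clauses of $F$ containing $x$. For a variable $v$, the DP-reduction is $\mathrm{DP}_v(F) := \{C \in F : v \notin \mathrm{var}(C)\} \cup \{(C \cup D)\setminus\{v,\overline{v}\} : C, D \in F,\ C \cap \overline{D} = \{v\}\}$ (where $\overline{D}=\{\overline{y}: y\in D\}$). $\mathrm{MU}$ is the set of minimally unsatisfiable clause-sets (unsatisfiable, but every proper subset is satisfiable). $F \in \mathrm{MU}$ is saturated if for every $C \in F$ and every literal $x$ with $\mathrm{var}(x) \in \mathrm{var}(F)\setminus \mathrm{var}(C)$, the clause-set $(F\setminus\{C\})\cup\{C\cup\{x\}\}$ is satisfiable. A variable $v$ is singular for $F$ if $\min(\mathrm{ldeg}_F(v),\mathrm{ldeg}_F(\overline{v}))=1$; $F$ is nonsingular if it has no singular variable. A singular DP-reduction step is $F \leadsto \mathrm{DP}_v(F)$ for $F\in \mathrm{MU}$ and $v$ singular for $F$ (the result is again in $\mathrm{MU}$). $\mathrm{sDP}(F)$ is the set of nonsingular $F' \in \mathrm{MU}$ obtainable from $F$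 by zero or more singular DP-reduction steps. *)

theory Defs
  imports Main
begin

datatype 'v lit = Pos 'v | Neg 'v

fun comp :: "'v lit \<Rightarrow> 'v lit" where
  "comp (Pos v) = Neg v" | "comp (Neg v) = Pos v"

fun lvar :: "'v lit \<Rightarrow> 'v" where
  "lvar (Pos v) = v" | "lvar (Neg v) = v"

type_synonym 'v clause = "'v lit set"
type_synonym 'v cls = "'v clause set"

definition is_clause :: "'v clause \<Rightarrow> bool" where
  "is_clause C \<longleftrightarrow> finite C \<and> (\<forall>x\<in>C. comp x \<notin> C)"

definition is_clause_set :: "'v cls \<Rightarrow> bool" where
  "is_clause_set F \<longleftrightarrow> finite F \<and> (\<forall>C\<in>F. is_clause C)"

definition var_cl :: "'v clause \<Rightarrow> 'v set" where
  "var_cl C = lvar ` C"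

definition var_cs :: "'v cls \<Rightarrow> 'v set" where
  "var_cs F = (\<Union>C\<in>F. var_cl C)"

fun lit_true :: "('v \<Rightarrow> bool) \<Rightarrow> 'v lit \<Rightarrow> bool" where
  "lit_true \<phi> (Pos v) = \<phi> v" | "lit_true \<phi> (Neg v) = (\<not> \<phi> v)"

definition sat :: "'v cls \<Rightarrow> bool" where
  "sat F \<longleftrightarrow> (\<exists>\<phi>. \<forall>C\<in>F. \<exists>x\<in>C. lit_true \<phi> x)"

definition MU :: "'v cls set" where
  "MU = {F. is_clause_set F \<and> \<not> sat F \<and> (\<forall>F'. F' \<subset> F \<longrightarrow> sat F')}"

definition ldeg :: "'v cls \<Rightarrow> 'v lit \<Rightarrow> nat" where
  "ldeg F x = card {C\<in>F. x \<in> C}"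

definition DP :: "'v \<Rightarrow> 'v cls \<Rightarrow> 'v cls" where
  "DP v F = {C\<in>F. v \<notin> var_cl C} \<union>
     {(C \<union> D) - {Pos v, Neg v} | C D. C \<in> F \<and> D \<in> F \<and> C \<inter> comp ` D = {Pos v}}"

definition saturated :: "'v cls \<Rightarrow> bool" where
  "saturated F \<longleftrightarrow> F \<in> MU \<and>
     (\<forall>C\<in>F. \<forall>x. lvar x \<in> var_cs F - var_cl C \<longrightarrow> sat (insert (C \<union> {x}) (F - {C})))"

definition singular :: "'v \<Rightarrow> 'v cls \<Rightarrow> bool" where
  "singular v F \<longleftrightarrow> min (ldeg F (Pos v)) (ldeg F (Neg v)) = 1"

definition nonsingular :: "'v cls \<Rightarrow> bool" where
  "nonsingular F \<longleftrightarrow> (\<forall>v. \<not> singular v F)"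

definition sDP_step :: "'v cls \<Rightarrow> 'v cls \<Rightarrow> bool" where
  "sDP_step F G \<longleftrightarrow> F \<in> MU \<and> (\<exists>v. singular v F \<and> G = DP v F)"

definition sDP :: "'v cls \<Rightarrow> 'v cls set" where
  "sDP F = {F'. sDP_step\<^sup>*\<^sup>* F F' \<and> F' \<in> MU \<and> nonsingular F'}"

end

theory Submission
  imports Defs "HOL-Library.Confluence"
begin

text \<open>
  Let x occur in exactly one clause C of a saturated F. Every clause D containing the complement
  of x then contains C - {x}: otherwise saturation yields a model of F - {D} making some
  y \<in> C - {x} true, and flipping x to false turns it into a model of F. Hence every resolvent
  on x is D minus the complement of x, i.e. the singular DP-step on x is just the partial
  assignment x \<mapsto> true, and this assignment keeps F saturated. Two such steps on different
  variables leave each other's literal singular and commute, so singular DP-reduction is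
  strongly confluent on saturated clause-sets; as it removes a variable in each step, every
  reduction reaches a nonsingular clause-set, and confluence makes it unique.
\<close>

definition clause_true :: "('v \<Rightarrow> bool) \<Rightarrow> 'v clause \<Rightarrow> bool" where
  "clause_true \<phi> C \<longleftrightarrow> (\<exists>x\<in>C. lit_true \<phi> x)"

definition make_true :: "('v \<Rightarrow> bool) \<Rightarrow> 'v lit \<Rightarrow> 'v \<Rightarrow> bool" where
  "make_true \<phi> x = \<phi>(lvar x := (x = Pos (lvar x)))"

lemma comp_comp [simp]: "comp (comp x) = x"
  by (cases x) auto

lemma lvar_comp [simp]: "lvar (comp x) = lvar x"
  by (cases x) auto

lemma mem_comp_image_iff [simp]: "y \<in> comp ` A \<longleftrightarrow> comp y \<in> A"
  by (metis comp_comp image_iff)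

lemma lvar_eq_lvar_iff: "lvar y = lvar x \<longleftrightarrow> y = x \<or> y = comp x"
  by (cases x; cases y) auto

lemma lit_true_comp [simp]: "lit_true \<phi> (comp x) \<longleftrightarrow> \<not> lit_true \<phi> x"
  by (cases x) auto

lemma lit_true_make_true_self [simp]: "lit_true (make_true \<phi> x) x"
  by (cases x) (auto simp: make_true_def)

lemma lit_true_make_true_other [simp]:
  "lvar z \<noteq> lvar x \<Longrightarrow> lit_true (make_true \<phi> x) z \<longleftrightarrow> lit_true \<phi> z"
  by (cases x; cases z) (auto simp: make_true_def)

lemma sat_iff_clause_true: "sat F \<longleftrightarrow> (\<exists>\<phi>. \<forall>C\<in>F. clause_true \<phi> C)"
  by (simp add: sat_def clause_true_def)

lemma sat_subset: "F' \<subseteq> F \<Longrightarrow> sat F \<Longrightarrow> sat F'"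
  unfolding sat_def by blast

lemma lvar_in_var_cl_iff: "lvar y \<in> var_cl E \<longleftrightarrow> y \<in> E \<or> comp y \<in> E"
  unfolding var_cl_def by (metis image_iff lvar_comp lvar_eq_lvar_iff)

lemma clause_true_make_true_self: "x \<in> E \<Longrightarrow> clause_true (make_true \<phi> x) E"
  unfolding clause_true_def using lit_true_make_true_self by blast

lemma clause_true_make_true:
  assumes "z \<in> E" "lit_true \<phi> z" "z \<noteq> comp x"
  shows "clause_true (make_true \<phi> x) E"
proof (cases "z = x")
  case False
  with assms have "lvar z \<noteq> lvar x" by (simp add: lvar_eq_lvar_iff)
  with assms show ?thesis
    unfolding clause_true_def using lit_true_make_true_other by blast
qed (use assms clause_true_make_true_self in auto)

lemma MU_comp_notin_clause: "F \<in> MU \<Longrightarrow> E \<in> F \<Longrightarrow> x \<in> E \<Longrightarrow> comp x \<notin> E"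
  by (auto simp: MU_def is_clause_set_def is_clause_def)

lemma MU_model_without_clause:
  assumes "F \<in> MU" "E \<in> F"
  obtains \<phi> where "\<forall>E'\<in>F - {E}. clause_true \<phi> E'" "\<not> clause_true \<phi> E"
proof -
  from assms have "sat (F - {E})" "\<not> sat F" by (auto simp: MU_def)
  then show ?thesis using that assms(2) by (auto simp: sat_iff_clause_true)
qed

lemma saturated_model_extending_clause:
  assumes "saturated F" "E \<in> F" "lvar y \<in> var_cs F" "lvar y \<notin> var_cl E"
  obtains \<psi> where "\<forall>E'\<in>F - {E}. clause_true \<psi> E'" "\<not> clause_true \<psi> E" "lit_true \<psi> y"
proof -
  from assms have "sat (insert (E \<union> {y}) (F - {E}))" by (auto simp: saturated_def)
  then obtain \<psi> where \<psi>: "\<forall>E'\<in>insert (E \<union> {y}) (F - {E}). clause_true \<psi> E'"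
    by (auto simp: sat_iff_clause_true)
  from assms have "\<not> sat F" by (auto simp: saturated_def MU_def)
  with \<psi> assms(2) have "\<not> clause_true \<psi> E" by (auto simp: sat_iff_clause_true)
  with \<psi> show ?thesis using that by (auto simp: clause_true_def)
qed

lemma MU_comp_occurs:
  assumes "F \<in> MU" "E \<in> F" "y \<in> E"
  shows "\<exists>D\<in>F. comp y \<in> D"
proof (rule ccontr)
  assume no_comp: "\<not> (\<exists>D\<in>F. comp y \<in> D)"
  obtain \<phi> where \<phi>: "\<forall>E'\<in>F - {E}. clause_true \<phi> E'"
    using MU_model_without_clause[OF assms(1,2)] by blast
  have "clause_true (make_true \<phi> y) E'" if "E' \<in> F" for E'
  proof (cases "y \<in> E'")
    case False
    with assms \<phi> that obtain z where "z \<in> E'" "lit_true \<phi> z"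
      by (auto simp: clause_true_def)
    with no_comp that show ?thesis by (blast intro: clause_true_make_true)
  qed (rule clause_true_make_true_self)
  then have "sat F" by (auto simp: sat_iff_clause_true)
  with assms show False by (auto simp: MU_def)
qed

lemma unique_occurrenceD:
  assumes "{E\<in>F. x \<in> E} = {C}"
  shows "C \<in> F" "x \<in> C" "\<And>E. E \<in> F \<Longrightarrow> x \<in> E \<Longrightarrow> E = C"
  using assms by auto

lemma sat_falsifying_unique_occurrence:
  assumes unique: "{E\<in>F. x \<in> E} = {C}" and D: "D \<in> F" "comp x \<in> D"
    and y: "y \<in> C" "lvar y \<noteq> lvar x"
    and \<phi>: "\<forall>E\<in>F - {D}. clause_true \<phi> E" "lit_true \<phi> y"
  shows "sat F"
proof -
  have "clause_true (make_true \<phi> (comp x)) E" if E: "E \<in> F" for E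
  proof (cases "E = D")
    case True
    with D show ?thesis by (simp add: clause_true_make_true_self)
  next
    case False
    show ?thesis
    proof (cases "E = C")
      case True
      with y \<phi>(2) show ?thesis by (auto intro: clause_true_make_true simp: lvar_eq_lvar_iff)
    next
      case False
      with \<open>E \<noteq> D\<close> E \<phi>(1) obtain z where "z \<in> E" "lit_true \<phi> z"
        by (auto simp: clause_true_def)
      moreover have "z \<noteq> x" using \<open>z \<in> E\<close> E False unique by blast
      ultimately show ?thesis by (auto intro: clause_true_make_true)
    qed
  qed
  then show ?thesis by (auto simp: sat_iff_clause_true)
qed

lemma saturated_unique_occurrence_subset:
  assumes sat: "saturated F" and unique: "{E\<in>F. x \<in> E} = {C}" and D: "D \<in> F" "comp x \<in> D"
  shows "C - {x} \<subseteq> D"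
proof
  fix y assume y: "y \<in> C - {x}"
  have mu: "F \<in> MU" using sat by (simp add: saturated_def)
  have C: "C \<in> F" "x \<in> C" using unique by auto
  have "y \<noteq> comp x" using y MU_comp_notin_clause[OF mu C] by auto
  with y have y_var: "lvar y \<noteq> lvar x" by (auto simp: lvar_eq_lvar_iff)
  have no_model: False if "\<forall>E\<in>F - {D}. clause_true \<phi> E" "lit_true \<phi> y" for \<phi>
    using sat_falsifying_unique_occurrence[OF unique D _ y_var that] y mu by (simp add: MU_def)
  show "y \<in> D"
  proof (rule ccontr)
    assume "y \<notin> D"
    show False
    proof (cases "comp y \<in> D")
      case True
      obtain \<phi> where \<phi>: "\<forall>E\<in>F - {D}. clause_true \<phi> E" "\<not> clause_true \<phi> D"
        using MU_model_without_clause[OF mu D(1)] by blast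
      with True have "lit_true \<phi> y" by (auto simp: clause_true_def)
      with \<phi>(1) show False by (rule no_model)
    next
      case False
      with \<open>y \<notin> D\<close> have "lvar y \<notin> var_cl D" by (simp add: lvar_in_var_cl_iff)
      moreover have "lvar y \<in> var_cs F" using y C by (auto simp: var_cs_def var_cl_def)
      ultimately show False
        using saturated_model_extending_clause[OF sat D(1)] no_model by metis
    qed
  qed
qed

definition assign :: "'v lit \<Rightarrow> 'v cls \<Rightarrow> 'v cls" where
  "assign x F = (\<lambda>E. E - {comp x}) ` {E\<in>F. x \<notin> E}"

lemma assignI: "E \<in> F \<Longrightarrow> x \<notin> E \<Longrightarrow> E - {comp x} \<in> assign x F"
  unfolding assign_def by blast

lemma assignE:
  assumes "E' \<in> assign x F"
  obtains E where "E \<in> F" "x \<notin> E" "E' = E - {comp x}"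
  using assms unfolding assign_def by blast

lemma Pos_Neg_lvar: "{Pos (lvar x), Neg (lvar x)} = {x, comp x}"
  by (cases x) auto

lemma DP_cases:
  assumes "E \<in> DP (lvar x) F"
  obtains "E \<in> F" "x \<notin> E" "comp x \<notin> E"
    | C D where "C \<in> F" "D \<in> F" "x \<in> C" "comp x \<in> D" "E = (C \<union> D) - {x, comp x}"
proof -
  let ?v = "lvar x"
  consider "E \<in> F" "?v \<notin> var_cl E"
    | C D where "C \<in> F" "D \<in> F" "C \<inter> comp ` D = {Pos ?v}" "E = (C \<union> D) - {x, comp x}"
    using assms unfolding DP_def Pos_Neg_lvar by fast
  then show ?thesis
  proof cases
    case 1
    then show ?thesis using that(1) by (simp add: lvar_in_var_cl_iff)
  next
    case (2 C D)
    from 2(3) have "Pos ?v \<in> C \<inter> comp ` D" by simp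
    then have CD: "Pos ?v \<in> C" "Neg ?v \<in> D" by simp_all
    show ?thesis
    proof (cases x)
      case (Pos v)
      with 2 CD show ?thesis by (intro that(2)[of C D]) simp_all
    next
      case (Neg v)
      with 2 CD show ?thesis by (intro that(2)[of D C]) (simp_all add: Un_commute)
    qed
  qed
qed

lemma clause_in_DP: "E \<in> F \<Longrightarrow> x \<notin> E \<Longrightarrow> comp x \<notin> E \<Longrightarrow> E \<in> DP (lvar x) F"
  unfolding DP_def by (simp add: lvar_in_var_cl_iff)

lemma resolvent_in_DP:
  assumes "C \<in> F" "D \<in> F" "C \<inter> comp ` D = {x}"
  shows "(C \<union> D) - {x, comp x} \<in> DP (lvar x) F"
proof -
  have resolve: "(C \<union> D) - {Pos v, Neg v} \<in> DP v F"
    if "C \<in> F" "D \<in> F" "C \<inter> comp ` D = {Pos v}" for C D v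
    using that unfolding DP_def by blast
  show ?thesis
  proof (cases x)
    case (Pos v)
    with assms resolve show ?thesis by simp
  next
    case (Neg v)
    from assms(3) have "D \<inter> comp ` C = {comp x}"
      unfolding set_eq_iff by (metis Int_iff comp_comp mem_comp_image_iff singleton_iff)
    with assms Neg have "(D \<union> C) - {Pos v, Neg v} \<in> DP v F" by (intro resolve) simp_all
    moreover have "(C \<union> D) - {x, comp x} = (D \<union> C) - {Pos v, Neg v}" using Neg by auto
    ultimately show ?thesis using Neg by simp
  qed
qed

lemma saturated_unique_occurrence_resolvent:
  assumes sat: "saturated F" and unique: "{E\<in>F. x \<in> E} = {C}" and D: "D \<in> F" "comp x \<in> D"
  shows "C \<inter> comp ` D = {x}" "(C \<union> D) - {x, comp x} = D - {comp x}"
proof -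
  have mu: "F \<in> MU" using sat by (simp add: saturated_def)
  have C: "C \<in> F" "x \<in> C" using unique by auto
  have sub: "C - {x} \<subseteq> D" using saturated_unique_occurrence_subset[OF sat unique D] .
  have only_x: "y = x" if "y \<in> C" "comp y \<in> D" for y
  proof (rule ccontr)
    assume "y \<noteq> x"
    with that sub have "y \<in> D" by blast
    with that MU_comp_notin_clause[OF mu D(1)] show False by simp
  qed
  show "C \<inter> comp ` D = {x}"
  proof (rule set_eqI)
    fix y show "y \<in> C \<inter> comp ` D \<longleftrightarrow> y \<in> {x}" using C D only_x[of y] by auto
  qed
  have "x \<notin> D" using MU_comp_notin_clause[OF mu D] by simp
  with sub show "(C \<union> D) - {x, comp x} = D - {comp x}" by auto
qed

lemma DP_eq_assign:
  assumes sat: "saturated F" and unique: "{E\<in>F. x \<in> E} = {C}"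
  shows "DP (lvar x) F = assign x F"
proof -
  have mu: "F \<in> MU" using sat by (simp add: saturated_def)
  have C: "C \<in> F" "x \<in> C" using unique by auto
  note resolvent = saturated_unique_occurrence_resolvent[OF sat unique]
  show ?thesis
  proof (rule set_eqI, rule iffI)
    fix E assume "E \<in> DP (lvar x) F"
    then show "E \<in> assign x F"
    proof (cases rule: DP_cases)
      case 1
      then show ?thesis using assignI[of E F x] by simp
    next
      case (2 C' D)
      then have "C' = C" using unique by auto
      moreover have "x \<notin> D" using MU_comp_notin_clause[OF mu 2(2,4)] by simp
      ultimately show ?thesis using 2 resolvent(2)[OF 2(2,4)] assignI[of D F x] by simp
    qed
  next
    fix E' assume "E' \<in> assign x F"
    then obtain E where E: "E \<in> F" "x \<notin> E" "E' = E - {comp x}" by (rule assignE)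
    show "E' \<in> DP (lvar x) F"
    proof (cases "comp x \<in> E")
      case True
      with E resolvent_in_DP[OF C(1) E(1) resolvent(1)] show ?thesis
        by (simp add: resolvent(2))
    next
      case False
      with E show ?thesis by (simp add: clause_in_DP)
    qed
  qed
qed

lemma assign_assign:
  assumes "lvar x \<noteq> lvar y"
  shows "assign x (assign y F) = (\<lambda>E. E - {comp x, comp y}) ` {E\<in>F. x \<notin> E \<and> y \<notin> E}"
proof (rule set_eqI)
  have x_comp_y: "x \<noteq> comp y" using assms by (auto simp: lvar_eq_lvar_iff)
  fix E
  show "E \<in> assign x (assign y F) \<longleftrightarrow>
      E \<in> (\<lambda>E. E - {comp x, comp y}) ` {E\<in>F. x \<notin> E \<and> y \<notin> E}"
  proof
    assume "E \<in> assign x (assign y F)"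
    then obtain E1 where E1: "E1 \<in> assign y F" "x \<notin> E1" "E = E1 - {comp x}" by (rule assignE)
    obtain E0 where E0: "E0 \<in> F" "y \<notin> E0" "E1 = E0 - {comp y}" using E1(1) by (rule assignE)
    from E1 E0 x_comp_y have "x \<notin> E0" "E = E0 - {comp x, comp y}" by auto
    with E0(1,2) show "E \<in> (\<lambda>E. E - {comp x, comp y}) ` {E\<in>F. x \<notin> E \<and> y \<notin> E}"
      by blast
  next
    assume "E \<in> (\<lambda>E. E - {comp x, comp y}) ` {E\<in>F. x \<notin> E \<and> y \<notin> E}"
    then obtain E0 where E0: "E0 \<in> F" "x \<notin> E0" "y \<notin> E0" "E = E0 - {comp x, comp y}" by blast
    then have "E0 - {comp y} \<in> assign y F" "x \<notin> E0 - {comp y}" by (simp_all add: assignI)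
    then have "E0 - {comp y} - {comp x} \<in> assign x (assign y F)" by (rule assignI)
    moreover have "E = E0 - {comp y} - {comp x}" using E0(4) by auto
    ultimately show "E \<in> assign x (assign y F)" by simp
  qed
qed

lemma assign_commute: "lvar x \<noteq> lvar y \<Longrightarrow> assign x (assign y F) = assign y (assign x F)"
  by (simp add: assign_assign insert_commute conj_commute)

lemma var_cs_assign: "var_cs (assign x F) \<subseteq> var_cs F - {lvar x}"
proof
  fix v assume "v \<in> var_cs (assign x F)"
  then obtain E' z where E': "E' \<in> assign x F" "z \<in> E'" "v = lvar z"
    unfolding var_cs_def var_cl_def by blast
  then obtain E where E: "E \<in> F" "x \<notin> E" "E' = E - {comp x}" by (blast elim: assignE)
  with E' have "z \<in> E" "z \<noteq> x" "z \<noteq> comp x" by auto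
  then show "v \<in> var_cs F - {lvar x}"
    using E(1) E'(3) by (auto simp: var_cs_def var_cl_def lvar_eq_lvar_iff)
qed

lemma clause_true_Diff_comp:
  "lit_true \<psi> x \<Longrightarrow> clause_true \<psi> E \<Longrightarrow> clause_true \<psi> (E - {comp x})"
  unfolding clause_true_def by (metis Diff_iff lit_true_comp singletonD)

lemma assign_models:
  assumes "lit_true \<psi> x" "\<forall>E'\<in>F - {E}. clause_true \<psi> E'"
  shows "\<forall>E'\<in>assign x F - {E - {comp x}}. clause_true \<psi> E'"
proof
  fix E' assume "E' \<in> assign x F - {E - {comp x}}"
  then obtain E2 where "E2 \<in> F - {E}" "E' = E2 - {comp x}" by (auto elim: assignE)
  with assms show "clause_true \<psi> E'" by (simp add: clause_true_Diff_comp)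
qed

lemma sat_assign_imp_sat:
  assumes "sat (assign x F)"
  shows "sat F"
proof -
  from assms obtain \<phi> where \<phi>: "\<forall>E'\<in>assign x F. clause_true \<phi> E'"
    by (auto simp: sat_iff_clause_true)
  have "clause_true (make_true \<phi> x) E" if "E \<in> F" for E
  proof (cases "x \<in> E")
    case False
    with that \<phi> have "clause_true \<phi> (E - {comp x})" by (simp add: assignI)
    then obtain z where "z \<in> E" "lit_true \<phi> z" "z \<noteq> comp x" by (auto simp: clause_true_def)
    then show ?thesis by (rule clause_true_make_true)
  qed (rule clause_true_make_true_self)
  then show ?thesis by (auto simp: sat_iff_clause_true)
qed

lemma is_clause_set_assign: "is_clause_set F \<Longrightarrow> is_clause_set (assign x F)"
  unfolding is_clause_set_def is_clause_def assign_def by auto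

lemma saturated_model_with_literal:
  assumes sat: "saturated F" and E: "E \<in> F" "x \<notin> E" and x: "lvar x \<in> var_cs F"
  obtains \<psi> where "\<forall>E'\<in>F - {E}. clause_true \<psi> E'" "lit_true \<psi> x"
proof (cases "comp x \<in> E")
  case True
  have mu: "F \<in> MU" using sat by (simp add: saturated_def)
  obtain \<phi> where "\<forall>E'\<in>F - {E}. clause_true \<phi> E'" "\<not> clause_true \<phi> E"
    using MU_model_without_clause[OF mu E(1)] by blast
  with True show ?thesis using that by (auto simp: clause_true_def)
next
  case False
  with E have "lvar x \<notin> var_cl E" by (simp add: lvar_in_var_cl_iff)
  then show ?thesis using saturated_model_extending_clause[OF sat E(1) x] that by blast
qed

lemma assign_MU:
  assumes sat: "saturated F" and x: "lvar x \<in> var_cs F"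
  shows "assign x F \<in> MU"
proof -
  have mu: "F \<in> MU" using sat by (simp add: saturated_def)
  have sat_remove: "sat (assign x F - {E'})" if E': "E' \<in> assign x F" for E'
  proof -
    obtain E where E: "E \<in> F" "x \<notin> E" "E' = E - {comp x}" using E' by (rule assignE)
    obtain \<psi> where "\<forall>E2\<in>F - {E}. clause_true \<psi> E2" "lit_true \<psi> x"
      using saturated_model_with_literal[OF sat E(1,2) x] by blast
    then have "\<forall>E2\<in>assign x F - {E'}. clause_true \<psi> E2"
      unfolding E(3) by (intro assign_models)
    then show ?thesis by (auto simp: sat_iff_clause_true)
  qed
  have "sat G" if "G \<subset> assign x F" for G
  proof -
    from that obtain E' where "E' \<in> assign x F" "G \<subseteq> assign x F - {E'}" by blast
    with sat_remove show ?thesis by (metis sat_subset)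
  qed
  moreover have "\<not> sat (assign x F)" using mu sat_assign_imp_sat by (auto simp: MU_def)
  moreover have "is_clause_set (assign x F)" using mu is_clause_set_assign by (auto simp: MU_def)
  ultimately show ?thesis by (simp add: MU_def)
qed

lemma saturated_unique_occurrence_make_true:
  assumes sat: "saturated F" and unique: "{E\<in>F. x \<in> E} = {C}" and "x \<notin> E"
    and models: "\<forall>E'\<in>F - {E}. clause_true \<psi> E'"
  shows "\<forall>E'\<in>F - {E}. clause_true (make_true \<psi> x) E'"
proof
  fix E' assume E': "E' \<in> F - {E}"
  show "clause_true (make_true \<psi> x) E'"
  proof (cases "x \<in> E'")
    case False
    from E' models obtain z where z: "z \<in> E'" "lit_true \<psi> z" by (auto simp: clause_true_def)
    show ?thesis
    proof (cases "z = comp x")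
      case True
      \<comment> \<open>Then x is false, so C is satisfied by a literal of C - {x}, which also lies in E'.\<close>
      have mu: "F \<in> MU" using sat by (simp add: saturated_def)
      have C: "C \<in> F - {E}" "x \<in> C" using unique \<open>x \<notin> E\<close> by auto
      with models obtain w where w: "w \<in> C" "lit_true \<psi> w" by (auto simp: clause_true_def)
      with True z have "w \<noteq> x" by auto
      moreover have "C - {x} \<subseteq> E'"
        using saturated_unique_occurrence_subset[OF sat unique] E' True z(1) by blast
      moreover have "w \<noteq> comp x" using MU_comp_notin_clause[OF mu] C w(1) by blast
      ultimately show ?thesis using w by (blast intro: clause_true_make_true)
    qed (use z in \<open>blast intro: clause_true_make_true\<close>)
  qed (rule clause_true_make_true_self)
qed

lemma assign_saturated:
  assumes sat: "saturated F" and unique: "{E\<in>F. x \<in> E} = {C}"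
  shows "saturated (assign x F)"
proof -
  have "lvar x \<in> var_cs F" using unique by (auto simp: var_cs_def var_cl_def)
  with sat have mu: "assign x F \<in> MU" by (rule assign_MU)
  have "sat (insert (E' \<union> {y}) (assign x F - {E'}))"
    if E': "E' \<in> assign x F" and y: "lvar y \<in> var_cs (assign x F) - var_cl E'" for E' y
  proof -
    obtain E where E: "E \<in> F" "x \<notin> E" "E' = E - {comp x}" using E' by (rule assignE)
    from y var_cs_assign[of x F] have y_var: "lvar y \<in> var_cs F" "lvar y \<noteq> lvar x" by blast+
    then have "y \<noteq> comp x" "comp y \<noteq> comp x" by (metis lvar_comp)+
    with y E(3) have "lvar y \<notin> var_cl E" by (auto simp: lvar_in_var_cl_iff)
    then obtain \<psi> where \<psi>: "\<forall>E2\<in>F - {E}. clause_true \<psi> E2" "lit_true \<psi> y"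
      using saturated_model_extending_clause[OF sat E(1) y_var(1)] by blast
    let ?\<psi> = "make_true \<psi> x"
    have "\<forall>E2\<in>F - {E}. clause_true ?\<psi> E2"
      using saturated_unique_occurrence_make_true[OF sat unique E(2) \<psi>(1)] .
    then have "\<forall>E2\<in>assign x F - {E'}. clause_true ?\<psi> E2"
      unfolding E(3) by (intro assign_models) simp
    moreover have "clause_true ?\<psi> (E' \<union> {y})"
      using \<psi>(2) y_var(2) by (simp add: clause_true_def)
    ultimately show ?thesis by (auto simp: sat_iff_clause_true)
  qed
  with mu show ?thesis unfolding saturated_def by blast
qed

lemma MU_singular_iff:
  assumes mu: "F \<in> MU"
  shows "singular v F \<longleftrightarrow> (\<exists>x C. lvar x = v \<and> {E\<in>F. x \<in> E} = {C})"
proof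
  assume "singular v F"
  then have "ldeg F (Pos v) = 1 \<or> ldeg F (Neg v) = 1"
    unfolding singular_def min_def by (auto split: if_splits)
  then obtain x where x: "lvar x = v" "card {E\<in>F. x \<in> E} = 1"
  proof (elim disjE)
    assume "ldeg F (Pos v) = 1"
    then show ?thesis using that[of "Pos v"] by (simp add: ldeg_def)
  next
    assume "ldeg F (Neg v) = 1"
    then show ?thesis using that[of "Neg v"] by (simp add: ldeg_def)
  qed
  then obtain C where "{E\<in>F. x \<in> E} = {C}" by (auto simp: card_1_singleton_iff)
  with x(1) show "\<exists>x C. lvar x = v \<and> {E\<in>F. x \<in> E} = {C}" by blast
next
  assume "\<exists>x C. lvar x = v \<and> {E\<in>F. x \<in> E} = {C}"
  then obtain x C where x: "lvar x = v" "{E\<in>F. x \<in> E} = {C}" by blast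
  then have deg: "ldeg F x = 1" by (simp add: ldeg_def)
  have "finite F" using mu by (simp add: MU_def is_clause_set_def)
  moreover have "{E\<in>F. comp x \<in> E} \<noteq> {}"
  proof -
    have "C \<in> F" "x \<in> C" using x(2) by auto
    then show ?thesis using MU_comp_occurs[OF mu] by auto
  qed
  ultimately have "ldeg F (comp x) \<noteq> 0" by (simp add: ldeg_def)
  with deg x(1) show "singular v F" by (cases x) (simp_all add: singular_def)
qed

lemma saturated_sDP_step_iff:
  assumes sat: "saturated F"
  shows "sDP_step F G \<longleftrightarrow> (\<exists>x C. {E\<in>F. x \<in> E} = {C} \<and> G = assign x F)"
proof -
  have mu: "F \<in> MU" using sat by (simp add: saturated_def)
  have "sDP_step F G \<longleftrightarrow> (\<exists>x C. {E\<in>F. x \<in> E} = {C} \<and> G = DP (lvar x) F)"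
    unfolding sDP_step_def MU_singular_iff[OF mu] using mu by auto
  also have "\<dots> \<longleftrightarrow> (\<exists>x C. {E\<in>F. x \<in> E} = {C} \<and> G = assign x F)"
    using DP_eq_assign[OF sat] by metis
  finally show ?thesis .
qed

lemma sDP_step_saturated:
  assumes sat: "saturated F" and step: "sDP_step F G"
  shows "saturated G"
  using step unfolding saturated_sDP_step_iff[OF sat]
  by (elim exE conjE) (simp add: assign_saturated[OF sat])

lemma finite_var_cs: "is_clause_set F \<Longrightarrow> finite (var_cs F)"
  by (simp add: is_clause_set_def is_clause_def var_cs_def var_cl_def)

lemma sDP_step_card_var_cs_less:
  assumes sat: "saturated F" and step: "sDP_step F G"
  shows "card (var_cs G) < card (var_cs F)"
proof -
  obtain x C where x: "{E\<in>F. x \<in> E} = {C}" "G = assign x F"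
    using step unfolding saturated_sDP_step_iff[OF sat] by (elim exE conjE)
  then have "C \<in> F" "x \<in> C" by auto
  then have "lvar x \<in> var_cs F" by (auto simp: var_cs_def var_cl_def)
  with x(2) have "var_cs G \<subset> var_cs F" using var_cs_assign[of x F] by blast
  moreover have "finite (var_cs F)"
    using sat by (intro finite_var_cs) (simp add: saturated_def MU_def)
  ultimately show ?thesis by (rule psubset_card_mono[rotated])
qed

lemma assign_unique_occurrence:
  assumes sat: "saturated F" and ux: "{E\<in>F. x \<in> E} = {C}" and uy: "{E\<in>F. y \<in> E} = {C'}"
    and xy: "lvar y \<noteq> lvar x"
  shows "{E\<in>assign x F. y \<in> E} = {C' - {comp x}}"
proof -
  have mu: "F \<in> MU" using sat by (simp add: saturated_def)
  note C = unique_occurrenceD[OF ux] and C' = unique_occurrenceD[OF uy]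
  have y: "y \<noteq> x" "y \<noteq> comp x" using xy by auto
  have "x \<notin> C'"
  proof
    assume "x \<in> C'"
    then have "C' = C" using C(3) C'(1) by blast
    obtain D where D: "D \<in> F" "comp x \<in> D" using MU_comp_occurs[OF mu C(1,2)] by blast
    have "y \<in> D"
      using saturated_unique_occurrence_subset[OF sat ux D] \<open>C' = C\<close> C'(2) y(1) by blast
    then have "D = C'" using C'(3) D(1) by blast
    with D \<open>x \<in> C'\<close> MU_comp_notin_clause[OF mu C'(1)] show False by simp
  qed
  with C'(1) have in_assign: "C' - {comp x} \<in> assign x F" by (rule assignI)
  have only_C': "E' = C' - {comp x}" if E': "E' \<in> assign x F" "y \<in> E'" for E'
  proof -
    obtain E where E: "E \<in> F" "E' = E - {comp x}" using E'(1) by (rule assignE)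
    with E'(2) have "E = C'" using C'(3) by blast
    with E show ?thesis by simp
  qed
  show ?thesis
  proof (rule set_eqI)
    fix E'
    show "E' \<in> {E\<in>assign x F. y \<in> E} \<longleftrightarrow> E' \<in> {C' - {comp x}}"
      using in_assign only_C'[of E'] C'(2) y by auto
  qed
qed

lemma sDP_step_diamond:
  assumes sat: "saturated F" and step1: "sDP_step F G1" and step2: "sDP_step F G2"
  shows "G1 = G2 \<or> (\<exists>H. sDP_step G1 H \<and> sDP_step G2 H)"
proof -
  obtain x C where x: "{E\<in>F. x \<in> E} = {C}" "G1 = assign x F"
    using step1 unfolding saturated_sDP_step_iff[OF sat] by (elim exE conjE)
  obtain y C' where y: "{E\<in>F. y \<in> E} = {C'}" "G2 = assign y F"
    using step2 unfolding saturated_sDP_step_iff[OF sat] by (elim exE conjE)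
  show ?thesis
  proof (cases "lvar x = lvar y")
    case True
    then show ?thesis using DP_eq_assign[OF sat x(1)] DP_eq_assign[OF sat y(1)] x(2) y(2) by simp
  next
    case False
    have "{E\<in>G1. y \<in> E} = {C' - {comp x}}"
      using assign_unique_occurrence[OF sat x(1) y(1)] False x(2) by simp
    then have "sDP_step G1 (assign y G1)"
      unfolding saturated_sDP_step_iff[OF sDP_step_saturated[OF sat step1]] by (intro exI conjI) (assumption, rule refl)
    moreover have "{E\<in>G2. x \<in> E} = {C - {comp y}}"
      using assign_unique_occurrence[OF sat y(1) x(1)] False y(2) by simp
    then have "sDP_step G2 (assign x G2)"
      unfolding saturated_sDP_step_iff[OF sDP_step_saturated[OF sat step2]] by (intro exI conjI) (assumption, rule refl)
    moreover have "assign y G1 = assign x G2"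
      using assign_commute[OF False] x(2) y(2) by simp
    ultimately show ?thesis by auto
  qed
qed

lemma confluentp_saturated_sDP_step: "confluentp (\<lambda>F G. saturated F \<and> sDP_step F G)"
  (is "confluentp ?R")
proof (rule strong_confluentp_imp_confluentp, rule strong_confluentpI)
  fix F G1 G2
  assume "?R F G1" "?R F G2"
  then have sat: "saturated G1" "saturated G2" and
    "G1 = G2 \<or> (\<exists>H. sDP_step G1 H \<and> sDP_step G2 H)"
    using sDP_step_saturated sDP_step_diamond by blast+
  then show "\<exists>H. ?R\<^sup>*\<^sup>* G1 H \<and> ?R\<^sup>=\<^sup>= G2 H"
    by (auto intro: r_into_rtranclp)
qed

lemma rtranclp_sDP_step_saturated:
  assumes "sDP_step\<^sup>*\<^sup>* F G" and "saturated F"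
  shows "(\<lambda>F G. saturated F \<and> sDP_step F G)\<^sup>*\<^sup>* F G \<and> saturated G"
  using assms
proof (induction rule: rtranclp_induct)
  case (step G H)
  then show ?case by (auto intro: rtranclp.rtrancl_into_rtrancl sDP_step_saturated)
qed simp

lemma sDP_nonempty: "saturated F \<Longrightarrow> sDP F \<noteq> {}"
proof (induction "card (var_cs F)" arbitrary: F rule: less_induct)
  case less
  have mu: "F \<in> MU" using less.prems by (simp add: saturated_def)
  show ?case
  proof (cases "nonsingular F")
    case True
    with mu have "F \<in> sDP F" by (simp add: sDP_def)
    then show ?thesis by blast
  next
    case False
    then obtain v where "singular v F" by (auto simp: nonsingular_def)
    with mu have step: "sDP_step F (DP v F)" by (auto simp: sDP_step_def)
    have "sDP (DP v F) \<noteq> {}"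
      using less.hyps sDP_step_card_var_cs_less[OF less.prems step]
        sDP_step_saturated[OF less.prems step] by blast
    then obtain N where "N \<in> sDP (DP v F)" by blast
    with step have "N \<in> sDP F" by (auto simp: sDP_def intro: converse_rtranclp_into_rtranclp)
    then show ?thesis by blast
  qed
qed

lemma sDP_unique:
  assumes sat: "saturated F" and N1: "N1 \<in> sDP F" and N2: "N2 \<in> sDP F"
  shows "N1 = N2"
proof -
  let ?R = "\<lambda>F G. saturated F \<and> sDP_step F G"
  have reach: "?R\<^sup>*\<^sup>* F N" if "N \<in> sDP F" for N
    using that rtranclp_sDP_step_saturated[OF _ sat] by (simp add: sDP_def)
  have final: "M = N" if "N \<in> sDP F" "?R\<^sup>*\<^sup>* N M" for N M
  proof -
    from that(1) have "\<not> sDP_step N G" for G by (auto simp: sDP_def sDP_step_def nonsingular_def)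
    with that(2) show ?thesis by (auto elim: converse_rtranclpE)
  qed
  obtain M where "?R\<^sup>*\<^sup>* N1 M" "?R\<^sup>*\<^sup>* N2 M"
    using confluentpD[OF confluentp_saturated_sDP_step reach[OF N1] reach[OF N2]] by blast
  with final N1 N2 show ?thesis by metis
qed

theorem theorem23:
  fixes F :: "'v cls"
  assumes "F \<in> MU" and "saturated F"
  shows "card (sDP F) = 1"
proof -
  obtain N where "N \<in> sDP F" using sDP_nonempty[OF assms(2)] by blast
  with sDP_unique[OF assms(2)] have "sDP F = {N}" by blast
  then show ?thesis by simp
qed

end
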